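(* Let $Q$ and $C$ be fixed probability measures on $(\mathcal{X},\mathcal{A})$ with disjoint supports, and for a sequence $\delta_N\in(0,1)$ let $P=P_N=(1-\delta_N)Q+\delta_NC$, so that $\lambda_N=\mathrm{TV}(P_N,Q)=\delta_N$. Consider the model of all such sequences $(\delta_N)_{N\ge1}$. Then for every $\varepsilon\in(0,1]$, $$\underline\gamma^{\hat\lambda_{\mathrm{bayes}}}(\varepsilon)=\underline\gamma^{\mathrm{oracle}}(\varepsilon)=-1.$$
   Context: Setting: for each $N$, $m=m_N,n=n_N$ are deterministic positive integers, $N=m+n$, $m\le n$, $m/N\to\pi\in(0,1)$; independent samples $X_1,\dots,X_m$ i.i.d. $\sim P_N$ and $Y_1,\dots,Y_n$ i.i.d. $\sim Q$; $\alpha\in(0,1)$ fixed; $f,g$ are densities of $P_N,Q$ w.r.t. a common dominating measure and $\rho^*(z)=g(z)/(f(z)+g(z))$. For $t\in[0,1]$: $F(t)=P_N(\rho^*(X)\le t)$, $G(t)=Q(\rho^*(Y)\le t)$, $\hat F_m,\hat G_n$ the corresponding empirical distribution functions of $\rho^*(X_i)$ and $\rho^*(Y_j)$, $\sigma(t)=\sqrt{F(t)(1-F(t))/m+G(t)(1-G(t))/n}$, and $\hat\lambda^{\rho^*}(t)=\hat F_m(t)-\hat G_n(t)-q_{1-\alpha}\sigma(t)$ ($q_{1-\alpha}$ the standard normal quantile). The estimator $\hat\lambda_{\mathrm{bayes}}=\hat A_0+\hat A_1-1-q_{1-\alpha}\hat\sigma$ with $\hat A_0=\frac1m\sum_i\mathbf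 1\{\rho^*(X_i)\le1/2\}$, $\hat A_1=\frac1n\sum_j\mathbf 1\{\rho^*(Y_j)>1/2\}$, $\hat\sigma=\sqrt{\hat A_0(1-\hat A_0)/m+\hat A_1(1-\hat A_1)/n}$. $h_1\asymp h_2$ means both ratios have finite limsup. For an estimator $\hat\lambda$ and $\varepsilon\in(0,1]$, $\underline\gamma^{\hat\lambda}(\varepsilon)$ is the infimum of all $\gamma_0\in[-1,0)$ such that for every $\gamma\in(\gamma_0,0)$ and every sequence in the model with $\lambda_N\asymp N^\gamma$, $\mathbb{P}(\hat\lambda>(1-\varepsilon)\lambda_N)\to1$. $\underline\gamma^{\mathrm{oracle}}(\varepsilon)$ is the infimum of all $\gamma_0\in[-1,0)$ such that for every $\gamma\in(\gamma_0,0)$ and every sequence in the model with $\lambda_N\asymp N^\gamma$ there is a deterministic $(t_N)\subset[0,1]$ with $\mathbb{P}(\hat\lambda^{\rho^*}(t_N)>(1-\varepsilon)\lambda_N)\to1$. *)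

theory Defs
  imports "HOL-Probability.Probability" "HOL-Library.Landau_Symbols"
begin

definition std_normal_cdf :: "real \<Rightarrow> real" where
  "std_normal_cdf x = measure (density lborel std_normal_density) {..x}"

definition std_normal_quantile :: "real \<Rightarrow> real" where
  "std_normal_quantile p = (THE x. std_normal_cdf x = p)"

definition mixture :: "real \<Rightarrow> 'a measure \<Rightarrow> 'a measure \<Rightarrow> 'a measure" where
  "mixture d Q C = measure_of (space Q) (sets Q)
     (\<lambda>A. ennreal (1 - d) * emeasure Q A + ennreal d * emeasure C A)"

definition disjoint_supports :: "'a measure \<Rightarrow> 'a measure \<Rightarrow> bool" where
  "disjoint_supports Q C \<longleftrightarrow> (\<exists>A\<in>sets Q. emeasure Q A = 1 \<and> emeasure C A = 0)"

definition rho_star :: "('a \<Rightarrow> real) \<Rightarrow> ('a \<Rightarrow> real) \<Rightarrow> 'a \<Rightarrow> real" where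
  "rho_star f g z = g z / (f z + g z)"

definition densities :: "'a measure \<Rightarrow> 'a measure \<Rightarrow> 'a measure
    \<Rightarrow> ('a \<Rightarrow> real) \<Rightarrow> ('a \<Rightarrow> real) \<Rightarrow> bool" where
  "densities P Q mu f g \<longleftrightarrow> sets mu = sets Q \<and>
     f \<in> borel_measurable mu \<and> g \<in> borel_measurable mu \<and>
     (\<forall>x. 0 \<le> f x) \<and> (\<forall>x. 0 \<le> g x) \<and>
     density mu (\<lambda>x. ennreal (f x)) = P \<and> density mu (\<lambda>x. ennreal (g x)) = Q"

definition sample_space :: "nat \<Rightarrow> nat \<Rightarrow> 'a measure \<Rightarrow> 'a measure
    \<Rightarrow> ((nat \<Rightarrow> 'a) \<times> (nat \<Rightarrow> 'a)) measure" where
  "sample_space m n P Q = (PiM {..<m} (\<lambda>_. P)) \<Otimes>\<^sub>M (PiM {..<n} (\<lambda>_. Q))"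

definition emp_cdf :: "nat \<Rightarrow> ('a \<Rightarrow> real) \<Rightarrow> (nat \<Rightarrow> 'a) \<Rightarrow> real \<Rightarrow> real" where
  "emp_cdf k rho zs t = real (card {i\<in>{..<k}. rho (zs i) \<le> t}) / real k"

definition lambda_bayes :: "real \<Rightarrow> nat \<Rightarrow> nat \<Rightarrow> ('a \<Rightarrow> real)
    \<Rightarrow> (nat \<Rightarrow> 'a) \<times> (nat \<Rightarrow> 'a) \<Rightarrow> real" where
  "lambda_bayes \<alpha> m n rho \<omega> =
     (let A0 = real (card {i\<in>{..<m}. rho (fst \<omega> i) \<le> 1/2}) / real m;
          A1 = real (card {j\<in>{..<n}. rho (snd \<omega> j) > 1/2}) / real n;
          s = sqrt (A0 * (1 - A0) / real m + A1 * (1 - A1) / real n)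
      in A0 + A1 - 1 - std_normal_quantile (1 - \<alpha>) * s)"

definition lambda_oracle :: "real \<Rightarrow> nat \<Rightarrow> nat \<Rightarrow> 'a measure \<Rightarrow> 'a measure
    \<Rightarrow> ('a \<Rightarrow> real) \<Rightarrow> real \<Rightarrow> (nat \<Rightarrow> 'a) \<times> (nat \<Rightarrow> 'a) \<Rightarrow> real" where
  "lambda_oracle \<alpha> m n P Q rho t \<omega> =
     (let F = measure P {x\<in>space P. rho x \<le> t};
          G = measure Q {y\<in>space Q. rho y \<le> t};
          s = sqrt (F * (1 - F) / real m + G * (1 - G) / real n)
      in emp_cdf m rho (fst \<omega>) t - emp_cdf n rho (snd \<omega>) t
         - std_normal_quantile (1 - \<alpha>) * s)"

definition model_seq :: "real \<Rightarrow> (nat \<Rightarrow> real) \<Rightarrow> bool" where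
  "model_seq \<gamma> \<delta> \<longleftrightarrow> (\<forall>N. 0 < \<delta> N \<and> \<delta> N < 1) \<and>
     \<delta> \<in> \<Theta>(\<lambda>N. real N powr \<gamma>)"

definition bayes_good :: "real \<Rightarrow> (nat \<Rightarrow> nat) \<Rightarrow> (nat \<Rightarrow> nat) \<Rightarrow> 'a measure
    \<Rightarrow> 'a measure \<Rightarrow> real \<Rightarrow> real \<Rightarrow> bool" where
  "bayes_good \<alpha> m n Q C \<epsilon> \<gamma> \<longleftrightarrow>
     (\<forall>\<delta> mu f g. model_seq \<gamma> \<delta> \<longrightarrow>
        (\<forall>N. densities (mixture (\<delta> N) Q C) Q (mu N) (f N) (g N)) \<longrightarrow>
        (\<lambda>N. let S = sample_space (m N) (n N) (mixture (\<delta> N) Q C) Q in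
           measure S {\<omega>\<in>space S. lambda_bayes \<alpha> (m N) (n N) (rho_star (f N) (g N)) \<omega>
                                   > (1 - \<epsilon>) * \<delta> N}) \<longlonglongrightarrow> 1)"

definition oracle_good :: "real \<Rightarrow> (nat \<Rightarrow> nat) \<Rightarrow> (nat \<Rightarrow> nat) \<Rightarrow> 'a measure
    \<Rightarrow> 'a measure \<Rightarrow> real \<Rightarrow> real \<Rightarrow> bool" where
  "oracle_good \<alpha> m n Q C \<epsilon> \<gamma> \<longleftrightarrow>
     (\<forall>\<delta> mu f g. model_seq \<gamma> \<delta> \<longrightarrow>
        (\<forall>N. densities (mixture (\<delta> N) Q C) Q (mu N) (f N) (g N)) \<longrightarrow>
        (\<exists>t::nat \<Rightarrow> real. (\<forall>N. 0 \<le> t N \<and> t N \<le> 1) \<and>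
          (\<lambda>N. let S = sample_space (m N) (n N) (mixture (\<delta> N) Q C) Q in
             measure S {\<omega>\<in>space S.
               lambda_oracle \<alpha> (m N) (n N) (mixture (\<delta> N) Q C) Q
                 (rho_star (f N) (g N)) (t N) \<omega> > (1 - \<epsilon>) * \<delta> N}) \<longlonglongrightarrow> 1))"

definition gamma_lower :: "(real \<Rightarrow> bool) \<Rightarrow> real" where
  "gamma_lower good = Inf {\<gamma>0. -1 \<le> \<gamma>0 \<and> \<gamma>0 < 0 \<and> (\<forall>\<gamma>. \<gamma>0 < \<gamma> \<and> \<gamma> < 0 \<longrightarrow> good \<gamma>)}"

end

theory Submission
  imports Defs
begin

text \<open>
  Since Q and C have disjoint supports, the Bayes classifier separates them:
  Q{\<rho>* \<le> 1/2} = 0 and P{\<rho>* \<le> 1/2} = \<delta>.  Hence every Y-sample is classified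
  correctly, so A1 = 1, while m A0 is Binomial(m, \<delta>); the oracle at t = 1/2 sees
  F = \<delta> and G = 0.  A Chernoff bound gives A0 > (1 - \<eta>) \<delta> with probability at least
  1 - exp (- c m \<delta>), and on this event both estimators exceed (1 - \<epsilon>) \<delta> as soon as
  the standard-deviation term, of order sqrt (\<delta> / m), is below \<eta> \<delta>, i.e. once m \<delta>
  is large.  For \<delta> \<asymp> N^\<gamma> with \<gamma> > -1 and m \<asymp> N we have m \<delta> \<rightarrow> \<infinity>, so both
  estimators succeed for every \<gamma> \<in> (-1, 0), and both thresholds equal -1.
\<close>

section \<open>Mixtures\<close>

lemma sets_mixture [simp]: "sets (mixture d Q C) = sets Q"
  and space_mixture [simp]: "space (mixture d Q C) = space Q"
  unfolding mixture_def by (simp_all add: sets.space_closed)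

lemma emeasure_mixture:
  assumes "sets C = sets Q" and "B \<in> sets Q"
  shows "emeasure (mixture d Q C) B = ennreal (1 - d) * emeasure Q B + ennreal d * emeasure C B"
  unfolding mixture_def
proof (rule emeasure_measure_of_sigma)
  show "countably_additive (sets Q) (\<lambda>A. ennreal (1 - d) * emeasure Q A + ennreal d * emeasure C A)"
    using assms(1) by (auto simp: countably_additive_def suminf_add[symmetric] suminf_emeasure)
qed (auto simp: positive_def sets.sigma_algebra_axioms assms(2))

lemma
  assumes "prob_space Q" "prob_space C" "sets C = sets Q" and "0 \<le> d" "d \<le> 1"
  shows prob_space_mixture: "prob_space (mixture d Q C)"
    and measure_mixture:
      "B \<in> sets Q \<Longrightarrow> measure (mixture d Q C) B = (1 - d) * measure Q B + d * measure C B"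
proof -
  interpret Q: prob_space Q by fact
  interpret C: prob_space C by fact
  have emeasure_eq: "emeasure (mixture d Q C) B = ennreal ((1 - d) * measure Q B + d * measure C B)"
    if "B \<in> sets Q" for B
    using emeasure_mixture[OF assms(3) that] assms(3-5) that
    by (simp add: Q.emeasure_eq_measure C.emeasure_eq_measure ennreal_mult ennreal_plus)
  have "measure C (space Q) = 1"
    using C.prob_space sets_eq_imp_space_eq[OF assms(3)] by simp
  then show "prob_space (mixture d Q C)"
    using emeasure_eq[of "space Q"] by (intro prob_spaceI) (simp add: Q.prob_space)
  show "measure (mixture d Q C) B = (1 - d) * measure Q B + d * measure C B" if "B \<in> sets Q"
    using emeasure_eq[OF that] assms(4,5) by (simp add: measure_def del: ennreal_plus)
qed

lemma rho_star_le_half_iff: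
  assumes "0 \<le> f x" "0 \<le> g x"
  shows "rho_star f g x \<le> 1/2 \<longleftrightarrow> g x \<le> f x"
  using assms by (cases "f x + g x = 0") (auto simp: rho_star_def divide_le_eq)

lemma densities_emeasure_le:
  assumes "densities P Q mu f g" and "B \<in> sets Q"
  shows "(\<And>x. x \<in> B \<Longrightarrow> g x \<le> f x) \<Longrightarrow> emeasure Q B \<le> emeasure P B"
    and "(\<And>x. x \<in> B \<Longrightarrow> f x \<le> g x) \<Longrightarrow> emeasure P B \<le> emeasure Q B"
proof -
  have [measurable]: "f \<in> borel_measurable mu" "g \<in> borel_measurable mu" "B \<in> sets mu"
    and P: "P = density mu f" and Q: "Q = density mu g"
    using assms unfolding densities_def by auto
  have mono: "emeasure (density mu u) B \<le> emeasure (density mu v) B"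
    if [measurable]: "u \<in> borel_measurable mu" "v \<in> borel_measurable mu"
      and "\<And>x. x \<in> B \<Longrightarrow> u x \<le> v x" for u v :: "'a \<Rightarrow> real"
    using that(3) by (auto simp: emeasure_density intro!: nn_integral_mono ennreal_leI split: split_indicator)
  show "(\<And>x. x \<in> B \<Longrightarrow> g x \<le> f x) \<Longrightarrow> emeasure Q B \<le> emeasure P B"
    unfolding P Q by (rule mono) auto
  show "(\<And>x. x \<in> B \<Longrightarrow> f x \<le> g x) \<Longrightarrow> emeasure P B \<le> emeasure Q B"
    unfolding P Q by (rule mono) auto
qed

section \<open>Finite products of a probability space\<close>

lemma prob_PiM_PiE_eq_1:
  assumes "prob_space M" and "finite I" and "B \<in> sets M" and "measure M B = 1"
  shows "measure (PiM I (\<lambda>_. M)) (PiE I (\<lambda>_. B)) = 1"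
proof -
  interpret M: prob_space M by fact
  interpret PiM: product_prob_space "\<lambda>_. M"
    by (rule product_prob_spaceI) fact
  have "emeasure M B = 1"
    using assms(4) by (simp add: M.emeasure_eq_measure)
  then have "emeasure (PiM I (\<lambda>_. M)) (PiE I (\<lambda>_. B)) = 1"
    using PiM.emeasure_PiM[OF assms(2,3)] by simp
  then show ?thesis
    by (simp add: measure_def)
qed

lemma measure_pair_measure_Times:
  assumes "sigma_finite_measure N" and "A \<in> sets M" and "B \<in> sets N"
  shows "measure (M \<Otimes>\<^sub>M N) (A \<times> B) = measure M A * measure N B"
  unfolding measure_def sigma_finite_measure.emeasure_pair_measure_Times[OF assms]
  by (rule enn2real_mult)

lemma integral_PiM_exp_count:
  assumes "prob_space P" and "L \<in> sets P"
  shows "(\<integral>x. exp (- s * (\<Sum>i<m. indicator L (x i))) \<partial>PiM {..<m} (\<lambda>_. P))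
    = (1 - measure P L * (1 - exp (- s))) ^ m"
proof -
  interpret P: prob_space P by fact
  interpret PiP: product_prob_space "\<lambda>_. P"
    by (rule product_prob_spaceI) fact
  have exp_indicator: "(\<lambda>z. exp (- s * indicator L z)) = (\<lambda>z. 1 - (1 - exp (- s)) * indicator L z)"
    by (auto simp: indicator_def)
  have integrable_indicator: "integrable P (\<lambda>z. (1 - exp (- s)) * indicator L z)"
    using assms(2) by (intro integrable_mult_right integrable_real_indicator) (auto simp: P.emeasure_eq_measure)
  then have integrable: "integrable P (\<lambda>z. exp (- s * indicator L z))"
    unfolding exp_indicator by (intro Bochner_Integration.integrable_diff) auto
  have "(\<integral>x. exp (- s * (\<Sum>i<m. indicator L (x i))) \<partial>PiM {..<m} (\<lambda>_. P))
      = (\<integral>x. (\<Prod>i<m. exp (- s * indicator L (x i))) \<partial>PiM {..<m} (\<lambda>_. P))"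
    by (simp add: sum_distrib_left exp_sum)
  also have "\<dots> = (\<Prod>i<m. \<integral>z. exp (- s * indicator L z) \<partial>P)"
    using integrable by (intro PiP.product_integral_prod) auto
  also have "(\<integral>z. exp (- s * indicator L z) \<partial>P) = 1 - measure P L * (1 - exp (- s))"
    unfolding exp_indicator using integrable_indicator assms(2)
    by (simp add: Bochner_Integration.integral_diff P.prob_space Int_absorb2)
  finally show ?thesis by simp
qed

lemma real_card_eq_sum_indicator:
  fixes x :: "nat \<Rightarrow> 'a"
  shows "real (card {i\<in>{..<m}. x i \<in> L}) = (\<Sum>i<m. indicator L (x i))"
  using sum_mult_indicator[OF finite_lessThan, where f = "\<lambda>_. 1::real" and B = "\<lambda>_. L" and g = x]
  by simp

lemma real_card_eq_sum_if:
  "real (card {i\<in>{..<m::nat}. P i}) = (\<Sum>i<m. if P i then 1 else 0)"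
  using sum.inter_filter[of "{..<m}" "\<lambda>_. 1::real" P] by simp

lemma prob_PiM_count_le_Chernoff:
  assumes "prob_space P" and L: "L \<in> sets P" and s: "0 < s"
  shows "measure (PiM {..<m} (\<lambda>_. P))
      {x\<in>space (PiM {..<m} (\<lambda>_. P)). real (card {i\<in>{..<m}. x i \<in> L}) \<le> a}
    \<le> exp (s * a - real m * measure P L * (1 - exp (- s)))"
proof -
  define X where "X = PiM {..<m} (\<lambda>_. P)"
  define p where "p = measure P L"
  interpret P: prob_space P by fact
  interpret X: prob_space X
    unfolding X_def by (rule prob_space_PiM) (rule assms(1))
  define K where "K x = (\<Sum>i<m. indicator L (x i) :: real)" for x :: "nat \<Rightarrow> 'a"
  have card_eq: "real (card {i\<in>{..<m}. x i \<in> L}) = K x" for x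
    unfolding K_def by (rule real_card_eq_sum_indicator)
  have [measurable]: "K \<in> borel_measurable X"
    unfolding K_def X_def using L by measurable
  have integrable: "integrable X (\<lambda>x. exp (- s * K x))"
  proof (rule X.integrable_const_bound[where B=1])
    show "AE x in X. norm (exp (- s * K x)) \<le> 1"
      using s by (auto simp: K_def intro!: AE_I2 mult_nonneg_nonneg sum_nonneg)
  qed measurable
  then have "set_integrable X (space X) (\<lambda>x. exp (- s * K x))"
    unfolding set_integrable_def by (rule integrable_mult_indicator[OF sets.top])
  then have "measure X {x\<in>space X. K x \<le> a} \<le> exp (s * a) * (\<integral>x\<in>space X. exp (- s * K x) \<partial>X)"
    by (rule X.Chernoff_ineq_le[OF s _ sets.top])
  also have "(\<integral>x\<in>space X. exp (- s * K x) \<partial>X) = (1 - p * (1 - exp (- s))) ^ m"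
    using set_integral_space[OF integrable] integral_PiM_exp_count[OF assms(1,2), of m s]
    by (simp add: K_def X_def p_def)
  also have "(1 - p * (1 - exp (- s))) ^ m \<le> exp (- p * (1 - exp (- s))) ^ m"
  proof -
    have "p * (1 - exp (- s)) \<le> 1"
      using s unfolding p_def by (intro mult_le_one) (auto simp: P.measure_le_1)
    then show ?thesis
      using exp_ge_add_one_self[of "- p * (1 - exp (- s))"] by (intro power_mono) auto
  qed
  also have "exp (s * a) * exp (- p * (1 - exp (- s))) ^ m = exp (s * a - real m * p * (1 - exp (- s)))"
    unfolding exp_of_nat_mult[symmetric] exp_add[symmetric] by (simp add: algebra_simps)
  finally show ?thesis
    unfolding card_eq X_def p_def by simp
qed

lemma prob_PiM_count_gt_Chernoff:
  assumes "prob_space P" and "L \<in> sets P" and "0 < s"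
  shows "1 - exp (s * a - real m * measure P L * (1 - exp (- s)))
    \<le> measure (PiM {..<m} (\<lambda>_. P))
         {x\<in>space (PiM {..<m} (\<lambda>_. P)). a < real (card {i\<in>{..<m}. x i \<in> L})}"
proof -
  define X where "X = PiM {..<m} (\<lambda>_. P)"
  define E where "E = {x\<in>space X. real (card {i\<in>{..<m}. x i \<in> L}) \<le> a}"
  interpret X: prob_space X
    unfolding X_def by (rule prob_space_PiM) (rule assms(1))
  have "E \<in> sets X"
    unfolding E_def X_def real_card_eq_sum_indicator using assms(2) by measurable
  moreover have "{x\<in>space X. a < real (card {i\<in>{..<m}. x i \<in> L})} = space X - E"
    unfolding E_def by auto
  ultimately have "measure X {x\<in>space X. a < real (card {i\<in>{..<m}. x i \<in> L})} = 1 - measure X E"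
    using X.prob_compl by simp
  moreover have "measure X E \<le> exp (s * a - real m * measure P L * (1 - exp (- s)))"
    unfolding E_def X_def by (rule prob_PiM_count_le_Chernoff[OF assms])
  ultimately show ?thesis
    unfolding X_def by linarith
qed

section \<open>The estimators on typical samples\<close>

lemma mult_sqrt_divide_le:
  fixes q \<eta> b v m :: real
  assumes q: "\<bar>q\<bar> \<le> \<eta> * sqrt (b * m)" and v: "0 \<le> v" "v \<le> b" and m: "0 < m"
  shows "q * sqrt (v / m) \<le> \<eta> * b"
proof -
  have "q * sqrt (v / m) \<le> \<bar>q\<bar> * sqrt (b / m)"
    using v m by (intro mult_mono real_sqrt_le_mono divide_right_mono) auto
  also have "\<dots> \<le> \<eta> * sqrt (b * m) * sqrt (b / m)"
    using q v m by (intro mult_right_mono) auto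
  also have "\<eta> * sqrt (b * m) * sqrt (b / m) = \<eta> * b"
    using v m by (simp add: mult.assoc real_sqrt_mult[symmetric])
  finally show ?thesis .
qed

lemma lambda_bayes_gt:
  fixes m n :: nat and d \<eta> \<epsilon> :: real and x y :: "nat \<Rightarrow> 'a" and rho :: "'a \<Rightarrow> real"
  assumes m: "0 < m" and n: "0 < n" and d: "0 < d"
    and \<eta>: "0 \<le> \<eta>" "\<eta> < 1" "2 * \<eta> \<le> \<epsilon>"
    and q: "\<bar>std_normal_quantile (1 - \<alpha>)\<bar> \<le> \<eta> * sqrt ((1 - \<eta>) * m * d)"
    and x: "(1 - \<eta>) * m * d < card {i\<in>{..<m}. rho (x i) \<le> 1/2}"
    and y: "\<forall>j<n. 1/2 < rho (y j)"
  shows "(1 - \<epsilon>) * d < lambda_bayes \<alpha> m n rho (x, y)"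
proof -
  define A0 where "A0 = card {i\<in>{..<m}. rho (x i) \<le> 1/2} / m"
  have A0: "(1 - \<eta>) * d < A0" "A0 \<le> 1"
    using x m card_mono[of "{..<m}" "{i\<in>{..<m}. rho (x i) \<le> 1/2}"]
    by (auto simp: A0_def pos_less_divide_eq mult_ac)
  have "{j\<in>{..<n}. 1/2 < rho (y j)} = {..<n}"
    using y by auto
  then have lambda_eq: "lambda_bayes \<alpha> m n rho (x, y)
      = A0 - std_normal_quantile (1 - \<alpha>) * sqrt (A0 * (1 - A0) / m)"
    using n by (simp add: lambda_bayes_def Let_def A0_def)
  have "(1 - \<eta>) * m * d \<le> A0 * m"
    using mult_right_mono[OF less_imp_le[OF A0(1)], of m] by (simp add: mult_ac)
  then have "\<bar>std_normal_quantile (1 - \<alpha>)\<bar> \<le> \<eta> * sqrt (A0 * m)"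
    using q \<eta>(1) by (meson mult_left_mono order_trans real_sqrt_le_mono)
  moreover have "0 < A0"
    using A0(1) mult_pos_pos[of "1 - \<eta>" d] \<eta>(2) d by linarith
  ultimately have "std_normal_quantile (1 - \<alpha>) * sqrt (A0 * (1 - A0) / m) \<le> \<eta> * A0"
    using A0(2) m by (intro mult_sqrt_divide_le) (auto simp: mult_left_le)
  moreover have "(1 - \<eta>) * ((1 - \<eta>) * d) < (1 - \<eta>) * A0"
    using A0(1) \<eta>(2) by simp
  moreover have "(1 - \<epsilon>) * d \<le> (1 - 2 * \<eta>) * d"
    using d \<eta>(3) by (intro mult_right_mono) auto
  moreover have "(1 - \<eta>) * ((1 - \<eta>) * d) = (1 - 2 * \<eta>) * d + \<eta> * \<eta> * d"
    by (simp add: algebra_simps)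
  moreover have "0 \<le> \<eta> * \<eta> * d"
    using d by simp
  ultimately show ?thesis
    unfolding lambda_eq by (simp add: algebra_simps)
qed

lemma lambda_oracle_gt:
  fixes m n :: nat and d \<eta> \<epsilon> :: real and x y :: "nat \<Rightarrow> 'a" and rho :: "'a \<Rightarrow> real"
  assumes m: "0 < m" and n: "0 < n" and d: "0 < d" "d \<le> 1"
    and \<eta>: "0 \<le> \<eta>" "2 * \<eta> \<le> \<epsilon>"
    and q: "\<bar>std_normal_quantile (1 - \<alpha>)\<bar> \<le> \<eta> * sqrt ((1 - \<eta>) * m * d)"
    and F: "measure P {z\<in>space P. rho z \<le> 1/2} = d"
    and G: "measure Q {z\<in>space Q. rho z \<le> 1/2} = 0"
    and x: "(1 - \<eta>) * m * d < card {i\<in>{..<m}. rho (x i) \<le> 1/2}"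
    and y: "\<forall>j<n. 1/2 < rho (y j)"
  shows "(1 - \<epsilon>) * d < lambda_oracle \<alpha> m n P Q rho (1/2) (x, y)"
proof -
  define A0 where "A0 = card {i\<in>{..<m}. rho (x i) \<le> 1/2} / m"
  have A0: "(1 - \<eta>) * d < A0"
    using x m by (auto simp: A0_def pos_less_divide_eq mult_ac)
  have "{j\<in>{..<n}. rho (y j) \<le> 1/2} = {}"
    using y by force
  then have lambda_eq: "lambda_oracle \<alpha> m n P Q rho (1/2) (x, y)
      = A0 - std_normal_quantile (1 - \<alpha>) * sqrt (d * (1 - d) / m)"
    using F G by (simp add: lambda_oracle_def emp_cdf_def A0_def)
  have "(1 - \<eta>) * m * d \<le> d * m"
    using \<eta>(1) d by (simp add: algebra_simps)
  then have "\<bar>std_normal_quantile (1 - \<alpha>)\<bar> \<le> \<eta> * sqrt (d * m)"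
    using q \<eta>(1) by (meson mult_left_mono order_trans real_sqrt_le_mono)
  then have "std_normal_quantile (1 - \<alpha>) * sqrt (d * (1 - d) / m) \<le> \<eta> * d"
    using d m by (intro mult_sqrt_divide_le) (auto simp: mult_left_le)
  moreover have "2 * \<eta> * d \<le> \<epsilon> * d"
    using d \<eta>(2) by (intro mult_right_mono) auto
  ultimately show ?thesis
    using A0 unfolding lambda_eq by (simp add: algebra_simps)
qed

definition typical_samples ::
    "nat \<Rightarrow> nat \<Rightarrow> ('a \<Rightarrow> real) \<Rightarrow> real \<Rightarrow> ((nat \<Rightarrow> 'a) \<times> (nat \<Rightarrow> 'a)) set" where
  "typical_samples m n rho a =
     {(x, y). a < card {i\<in>{..<m}. rho (x i) \<le> 1/2} \<and> (\<forall>j<n. 1/2 < rho (y j))}"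

section \<open>Contamination with disjoint supports\<close>

locale disjoint_contamination = Q: prob_space Q + C: prob_space C for Q C :: "'a measure" +
  fixes d :: real and mu :: "'a measure" and f g :: "'a \<Rightarrow> real"
  assumes sets_C: "sets C = sets Q" and disjoint: "disjoint_supports Q C"
    and d_pos: "0 < d" and d_less_1: "d < 1"
    and densities: "densities (mixture d Q C) Q mu f g"
begin

sublocale P: prob_space "mixture d Q C"
  using prob_space_mixture[OF Q.prob_space_axioms C.prob_space_axioms sets_C] d_pos d_less_1 by simp

lemma measure_P:
  "B \<in> sets Q \<Longrightarrow> measure (mixture d Q C) B = (1 - d) * measure Q B + d * measure C B"
  using measure_mixture[OF Q.prob_space_axioms C.prob_space_axioms sets_C] d_pos d_less_1 by simp

lemma f_nonneg: "0 \<le> f x" and g_nonneg: "0 \<le> g x"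
  using densities by (simp_all add: densities_def)

lemma measurable_f [measurable]: "f \<in> borel_measurable Q"
  and measurable_g [measurable]: "g \<in> borel_measurable Q"
  using densities measurable_cong_sets[of mu Q] by (auto simp: densities_def)

lemma disjoint_supportsE:
  obtains A where "A \<in> sets Q" "space Q - A \<in> null_sets Q" "A \<in> null_sets C"
proof -
  obtain A where A: "A \<in> sets Q" "emeasure Q A = 1" "emeasure C A = 0"
    using disjoint unfolding disjoint_supports_def by blast
  have "measure Q (space Q - A) = 0"
    using A Q.prob_compl[of A] by (simp add: Q.emeasure_eq_measure)
  then have "space Q - A \<in> null_sets Q"
    using A(1) by (simp add: Q.emeasure_eq_measure null_sets_def)
  then show thesis
    using A sets_C by (intro that) auto
qed

text \<open>On the support A of Q the mixture is (1 - d) Q, so Q \<le> P there forces Q = 0.\<close>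

lemma measure_Q_density_le: "measure Q {x\<in>space Q. g x \<le> f x} = 0"
proof -
  obtain A where A: "A \<in> sets Q" "space Q - A \<in> null_sets Q" "A \<in> null_sets C"
    by (rule disjoint_supportsE)
  define R where "R = {x\<in>space Q. g x \<le> f x} \<inter> A"
  have R: "R \<in> sets Q" using A(1) unfolding R_def by measurable
  have "R \<in> null_sets C"
    using A(3) by (rule null_sets_subset) (use R in \<open>auto simp: R_def sets_C\<close>)
  then have "measure C R = 0"
    by (rule measure_eq_0_null_sets)
  have "emeasure Q R \<le> emeasure (mixture d Q C) R"
    using R by (rule densities_emeasure_le(1)[OF densities]) (simp add: R_def)
  moreover have "0 \<le> (1 - d) * measure Q R"
    using d_less_1 by simp
  ultimately have "measure Q R \<le> (1 - d) * measure Q R"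
    using R \<open>measure C R = 0\<close> by (simp add: Q.emeasure_eq_measure P.emeasure_eq_measure measure_P)
  then have "d * measure Q R \<le> 0"
    by (simp add: left_diff_distrib)
  then have "measure Q R = 0"
    using d_pos measure_nonneg[of Q R] by (simp add: mult_le_0_iff)
  moreover have "R = {x\<in>space Q. g x \<le> f x} - (space Q - A)"
    unfolding R_def by auto
  ultimately show ?thesis
    using A(2) by (simp add: measure_Diff_null_set)
qed

text \<open>Off A the mixture is d C while Q vanishes, so P \<le> Q there forces C = 0.\<close>

lemma measure_C_density_le: "measure C {x\<in>space Q. g x \<le> f x} = 1"
proof -
  obtain A where A: "A \<in> sets Q" "space Q - A \<in> null_sets Q" "A \<in> null_sets C"
    by (rule disjoint_supportsE)
  define U where "U = {x\<in>space Q. f x < g x} - A"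
  have U: "U \<in> sets Q" using A(1) unfolding U_def by measurable
  have "U \<in> null_sets Q"
    using A(2) U by (rule null_sets_subset) (auto simp: U_def)
  then have "measure Q U = 0"
    by (rule measure_eq_0_null_sets)
  have "emeasure (mixture d Q C) U \<le> emeasure Q U"
    using U by (rule densities_emeasure_le(2)[OF densities]) (simp add: U_def)
  then have "d * measure C U \<le> 0"
    using U \<open>measure Q U = 0\<close>
    by (simp add: Q.emeasure_eq_measure P.emeasure_eq_measure measure_P ennreal_eq_0_iff)
  then have "measure C U = 0"
    using d_pos measure_nonneg[of C U] by (simp add: mult_le_0_iff)
  then have "measure C {x\<in>space Q. f x < g x} = 0"
    using A(3) U by (simp add: U_def measure_Diff_null_set sets_C)
  moreover have "{x\<in>space Q. g x \<le> f x} = space C - {x\<in>space Q. f x < g x}"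
    using sets_eq_imp_space_eq[OF sets_C] by auto
  ultimately show ?thesis
    using C.prob_compl[of "{x\<in>space Q. f x < g x}"] sets_C by simp
qed

lemma measurable_rho_star [measurable]: "rho_star f g \<in> borel_measurable Q"
  unfolding rho_star_def by measurable

lemma rho_star_le_half_eq_density_le:
  "{x\<in>space Q. rho_star f g x \<le> 1/2} = {x\<in>space Q. g x \<le> f x}"
  using rho_star_le_half_iff[of f _ g, OF f_nonneg g_nonneg] by blast

lemma measure_Q_rho_star_le_half: "measure Q {x\<in>space Q. rho_star f g x \<le> 1/2} = 0"
  unfolding rho_star_le_half_eq_density_le by (rule measure_Q_density_le)

lemma measure_P_rho_star_le_half:
  "measure (mixture d Q C) {x\<in>space Q. rho_star f g x \<le> 1/2} = d"
  unfolding rho_star_le_half_eq_density_le by (simp add: measure_P measure_Q_density_le measure_C_density_le)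

lemma measurable_rho_star_P [measurable]: "rho_star f g \<in> borel_measurable (mixture d Q C)"
  using measurable_rho_star by (simp add: measurable_cong_sets[OF sets_mixture refl])

lemma prob_space_sample_space: "prob_space (sample_space m n (mixture d Q C) Q)"
  unfolding sample_space_def
  by (intro prob_space_pair prob_space_PiM P.prob_space_axioms Q.prob_space_axioms)

lemma prob_typical_samples:
  fixes m n :: nat and s a :: real
  assumes s: "0 < s"
  defines "S \<equiv> sample_space m n (mixture d Q C) Q"
  shows "1 - exp (s * a - real m * d * (1 - exp (- s)))
    \<le> measure S (typical_samples m n (rho_star f g) a \<inter> space S)"
proof -
  define L where "L = {z\<in>space Q. rho_star f g z \<le> 1/2}"
  define X where "X = PiM {..<m} (\<lambda>_. mixture d Q C)"
  define Y where "Y = PiM {..<n} (\<lambda>_. Q)"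
  interpret X: prob_space X
    unfolding X_def by (rule prob_space_PiM) (rule P.prob_space_axioms)
  interpret Y: prob_space Y
    unfolding Y_def by (rule prob_space_PiM) (rule Q.prob_space_axioms)
  have "L \<in> sets Q"
    unfolding L_def by measurable
  then have L [measurable]: "L \<in> sets Q" "L \<in> sets (mixture d Q C)"
    by simp_all
  define H where "H = {x\<in>space X. a < real (card {i\<in>{..<m}. x i \<in> L})}"
  define G where "G = PiE {..<n} (\<lambda>_. space Q - L)"
  have H: "H \<in> sets X"
    unfolding H_def X_def real_card_eq_sum_indicator by measurable
  have G: "G \<in> sets Y"
    unfolding G_def Y_def by (rule sets_PiM_I_finite) (use L(1) in blast)+
  have "H = {x\<in>space X. a < card {i\<in>{..<m}. rho_star f g (x i) \<le> 1/2}}"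
  proof -
    have "{i\<in>{..<m}. rho_star f g (x i) \<le> 1/2} = {i\<in>{..<m}. x i \<in> L}" if "x \<in> space X" for x
      using that by (auto simp: X_def L_def space_PiM)
    then show ?thesis
      unfolding H_def by auto
  qed
  moreover have "G = {y\<in>space Y. \<forall>j<n. 1/2 < rho_star f g (y j)}"
    unfolding G_def Y_def L_def space_PiM by (rule set_eqI) (auto simp: PiE_iff not_le)
  moreover have "space S = space X \<times> space Y"
    unfolding S_def sample_space_def X_def Y_def by (simp add: space_pair_measure)
  ultimately have "typical_samples m n (rho_star f g) a \<inter> space S = H \<times> G"
    by (auto simp: typical_samples_def)
  moreover have "measure S (H \<times> G) = measure X H * measure Y G"
    unfolding S_def sample_space_def X_def[symmetric] Y_def[symmetric]
    using H G by (rule measure_pair_measure_Times[OF Y.sigma_finite_measure_axioms])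
  moreover have "measure Y G = 1"
  proof -
    have "measure Q (space Q - L) = 1"
      using Q.prob_compl[OF L(1)] measure_Q_rho_star_le_half[folded L_def] by simp
    then show ?thesis
      unfolding Y_def G_def using L(1)
      by (intro prob_PiM_PiE_eq_1[OF Q.prob_space_axioms finite_lessThan]) auto
  qed
  moreover have "measure (mixture d Q C) L = d"
    using measure_P_rho_star_le_half unfolding L_def .
  then have "1 - exp (s * a - real m * d * (1 - exp (- s))) \<le> measure X H"
    using prob_PiM_count_gt_Chernoff[OF P.prob_space_axioms L(2) s, of a m]
    unfolding H_def X_def by simp
  ultimately show ?thesis
    by simp
qed

lemma prob_lambda_exceeds:
  fixes m n :: nat and \<eta> \<epsilon> :: real
  assumes m: "0 < m" and n: "0 < n" and \<eta>: "0 < \<eta>" "\<eta> < 1" "2 * \<eta> \<le> \<epsilon>"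
    and q: "\<bar>std_normal_quantile (1 - \<alpha>)\<bar> \<le> \<eta> * sqrt ((1 - \<eta>) * m * d)"
  defines "S \<equiv> sample_space m n (mixture d Q C) Q"
    and "r \<equiv> 1 - exp (- \<eta>) - \<eta> * (1 - \<eta>)"
  shows "1 - exp (- r * (m * d))
      \<le> measure S {\<omega>\<in>space S. (1 - \<epsilon>) * d < lambda_bayes \<alpha> m n (rho_star f g) \<omega>}"
    and "1 - exp (- r * (m * d))
      \<le> measure S {\<omega>\<in>space S.
           (1 - \<epsilon>) * d < lambda_oracle \<alpha> m n (mixture d Q C) Q (rho_star f g) (1/2) \<omega>}"
proof -
  interpret S: prob_space S
    unfolding S_def by (rule prob_space_sample_space)
  define T where "T = typical_samples m n (rho_star f g) ((1 - \<eta>) * m * d) \<inter> space S"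
  have "1 - exp (- r * (m * d)) \<le> measure S T"
    using prob_typical_samples[OF \<eta>(1), where a = "(1 - \<eta>) * m * d" and m = m and n = n]
    unfolding T_def S_def r_def by (simp add: algebra_simps)
  also have "measure S T \<le> measure S {\<omega>\<in>space S. (1 - \<epsilon>) * d < U \<omega>}"
    if "{\<omega>\<in>space S. (1 - \<epsilon>) * d < U \<omega>} \<in> sets S"
      and "\<And>x y. (x, y) \<in> T \<Longrightarrow> (1 - \<epsilon>) * d < U (x, y)" for U
    using that by (intro S.finite_measure_mono) (auto simp: T_def)
  finally have exceeds: "1 - exp (- r * (m * d)) \<le> measure S {\<omega>\<in>space S. (1 - \<epsilon>) * d < U \<omega>}"
    if "{\<omega>\<in>space S. (1 - \<epsilon>) * d < U \<omega>} \<in> sets S"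
      and "\<And>x y. (x, y) \<in> T \<Longrightarrow> (1 - \<epsilon>) * d < U (x, y)" for U
    using that by blast
  show "1 - exp (- r * (m * d))
      \<le> measure S {\<omega>\<in>space S. (1 - \<epsilon>) * d < lambda_bayes \<alpha> m n (rho_star f g) \<omega>}"
  proof (rule exceeds)
    show "{\<omega>\<in>space S. (1 - \<epsilon>) * d < lambda_bayes \<alpha> m n (rho_star f g) \<omega>} \<in> sets S"
      unfolding S_def sample_space_def lambda_bayes_def Let_def real_card_eq_sum_if by measurable
    show "(1 - \<epsilon>) * d < lambda_bayes \<alpha> m n (rho_star f g) (x, y)" if "(x, y) \<in> T" for x y
      using that m n d_pos \<eta> q by (intro lambda_bayes_gt) (auto simp: T_def typical_samples_def)
  qed
  show "1 - exp (- r * (m * d))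
      \<le> measure S {\<omega>\<in>space S.
           (1 - \<epsilon>) * d < lambda_oracle \<alpha> m n (mixture d Q C) Q (rho_star f g) (1/2) \<omega>}"
  proof (rule exceeds)
    show "{\<omega>\<in>space S.
        (1 - \<epsilon>) * d < lambda_oracle \<alpha> m n (mixture d Q C) Q (rho_star f g) (1/2) \<omega>} \<in> sets S"
      unfolding S_def sample_space_def lambda_oracle_def emp_cdf_def Let_def real_card_eq_sum_if
      by measurable
    show "(1 - \<epsilon>) * d < lambda_oracle \<alpha> m n (mixture d Q C) Q (rho_star f g) (1/2) (x, y)"
      if "(x, y) \<in> T" for x y
      using that m n d_pos d_less_1 \<eta> q measure_P_rho_star_le_half measure_Q_rho_star_le_half
      by (intro lambda_oracle_gt) (auto simp: T_def typical_samples_def)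
  qed
qed

end

section \<open>Asymptotics\<close>

lemma Chernoff_rate_pos:
  fixes \<eta> :: real
  assumes "0 < \<eta>"
  shows "0 < 1 - exp (- \<eta>) - \<eta> * (1 - \<eta>)"
proof -
  have "exp (- \<eta>) * (1 + \<eta>) \<le> exp (- \<eta>) * exp \<eta>"
    by (intro mult_left_mono exp_ge_add_one_self) auto
  then have "exp (- \<eta>) \<le> 1 / (1 + \<eta>)"
    using assms by (simp add: exp_minus field_simps)
  moreover have "\<eta> * (1 - \<eta>) < 1 - 1 / (1 + \<eta>)"
    using assms by (simp add: field_simps power3_eq_cube)
  ultimately show ?thesis
    by linarith
qed

lemma filterlim_mult_model_seq_at_top:
  fixes m :: "nat \<Rightarrow> nat"
  assumes \<delta>: "model_seq \<gamma> \<delta>" and \<gamma>: "-1 < \<gamma>"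
    and m: "(\<lambda>N. real (m N) / real N) \<longlonglongrightarrow> \<pi>" and \<pi>: "0 < \<pi>"
  shows "filterlim (\<lambda>N. real (m N) * \<delta> N) at_top sequentially"
proof -
  have \<delta>_pos: "0 < \<delta> N" for N
    using \<delta> unfolding model_seq_def by auto
  obtain c where c: "0 < c"
    and c_le: "eventually (\<lambda>N. c * norm (real N powr \<gamma>) \<le> norm (\<delta> N)) sequentially"
    using \<delta> unfolding model_seq_def bigtheta_def bigomega_def by auto
  from c_le have \<delta>_ge: "eventually (\<lambda>N. c * real N powr \<gamma> \<le> \<delta> N) sequentially"
    by (rule eventually_mono) (simp add: abs_of_pos[OF \<delta>_pos])
  have m_ge: "eventually (\<lambda>N. \<pi> / 2 < real (m N) / real N) sequentially"
    by (rule order_tendstoD(1)[OF m]) (use \<pi> in simp)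
  have "filterlim (\<lambda>N. (\<pi> / 2 * c) * real N powr (1 + \<gamma>)) at_top sequentially"
  proof (rule filterlim_tendsto_pos_mult_at_top[OF tendsto_const])
    show "filterlim (\<lambda>N. real N powr (1 + \<gamma>)) at_top sequentially"
      by (rule filterlim_compose[OF real_powr_at_top filterlim_real_sequentially]) (use \<gamma> in simp)
  qed (use \<pi> c in simp)
  moreover have "eventually (\<lambda>N. (\<pi> / 2 * c) * real N powr (1 + \<gamma>) \<le> real (m N) * \<delta> N) sequentially"
    using \<delta>_ge m_ge eventually_gt_at_top[of 0]
  proof eventually_elim
    case (elim N)
    have "(\<pi> / 2 * c) * real N powr (1 + \<gamma>) = (\<pi> / 2) * (real N * (c * real N powr \<gamma>))"
      using elim(3) by (simp add: powr_add algebra_simps)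
    also have "\<dots> \<le> (real (m N) / real N) * (real N * \<delta> N)"
      using elim \<pi> c by (intro mult_mono) auto
    finally show ?case
      using elim(3) by simp
  qed
  ultimately show ?thesis
    by (rule filterlim_at_top_mono)
qed

lemma LIMSEQ_one_if_exp_bound:
  fixes u v :: "nat \<Rightarrow> real"
  assumes v: "filterlim v at_top sequentially" and c: "0 < c"
    and u: "eventually (\<lambda>N. 1 - exp (- c * v N) \<le> u N \<and> u N \<le> 1) sequentially"
  shows "u \<longlonglongrightarrow> 1"
proof (rule tendsto_sandwich)
  have "filterlim (\<lambda>N. - c * v N) at_bot sequentially"
    using c by (intro filterlim_tendsto_neg_mult_at_bot[OF tendsto_const _ v]) simp
  then have "(\<lambda>N. exp (- c * v N)) \<longlonglongrightarrow> 0"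
    by (rule filterlim_compose[OF exp_at_bot])
  then show "(\<lambda>N. 1 - exp (- c * v N)) \<longlonglongrightarrow> 1"
    using tendsto_diff[OF tendsto_const, of _ 0 sequentially 1] by simp
qed (use u in \<open>auto elim: eventually_mono\<close>)

lemma gamma_lower_eq_neg1:
  assumes "\<And>\<gamma>. -1 < \<gamma> \<Longrightarrow> \<gamma> < 0 \<Longrightarrow> good \<gamma>"
  shows "gamma_lower good = -1"
  unfolding gamma_lower_def by (rule cInf_eq_minimum) (use assms in auto)

lemma LIMSEQ_prob_lambda_exceeds:
  fixes m n :: "nat \<Rightarrow> nat" and \<delta> :: "nat \<Rightarrow> real" and \<epsilon> :: real
  assumes Q: "prob_space Q" and C: "prob_space C" and sets_C: "sets C = sets Q"
    and disjoint: "disjoint_supports Q C" and \<epsilon>: "0 < \<epsilon>" "\<epsilon> \<le> 1"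
    and model: "model_seq \<gamma> \<delta>" and \<gamma>: "-1 < \<gamma>"
    and m_ratio: "(\<lambda>N. real (m N) / real N) \<longlonglongrightarrow> \<pi>" and \<pi>: "0 < \<pi>"
    and mn: "eventually (\<lambda>N. 0 < m N \<and> 0 < n N) sequentially"
    and densities: "\<forall>N. densities (mixture (\<delta> N) Q C) Q (mu N) (f N) (g N)"
  shows "(\<lambda>N. let S = sample_space (m N) (n N) (mixture (\<delta> N) Q C) Q in
      measure S {\<omega>\<in>space S. lambda_bayes \<alpha> (m N) (n N) (rho_star (f N) (g N)) \<omega>
        > (1 - \<epsilon>) * \<delta> N}) \<longlonglongrightarrow> 1" (is "?bayes \<longlonglongrightarrow> 1")
    and "(\<lambda>N. let S = sample_space (m N) (n N) (mixture (\<delta> N) Q C) Q in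
      measure S {\<omega>\<in>space S. lambda_oracle \<alpha> (m N) (n N) (mixture (\<delta> N) Q C) Q
        (rho_star (f N) (g N)) (1/2) \<omega> > (1 - \<epsilon>) * \<delta> N}) \<longlonglongrightarrow> 1" (is "?oracle \<longlonglongrightarrow> 1")
proof -
  have \<delta>: "0 < \<delta> N \<and> \<delta> N < 1" for N
    using model unfolding model_seq_def by auto
  have m\<delta>: "filterlim (\<lambda>N. real (m N) * \<delta> N) at_top sequentially"
    using model \<gamma> m_ratio \<pi> by (rule filterlim_mult_model_seq_at_top)
  define \<eta> where "\<eta> = \<epsilon> / 2"
  define r where "r = 1 - exp (- \<eta>) - \<eta> * (1 - \<eta>)"
  let ?q = "std_normal_quantile (1 - \<alpha>)"
  have \<eta>: "0 < \<eta>" "\<eta> < 1" "2 * \<eta> \<le> \<epsilon>"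
    using \<epsilon> unfolding \<eta>_def by auto
  have r: "0 < r"
    unfolding r_def using \<eta>(1) by (rule Chernoff_rate_pos)
  have "eventually (\<lambda>N. (\<bar>?q\<bar> / \<eta>)\<^sup>2 / (1 - \<eta>) \<le> real (m N) * \<delta> N) sequentially"
    using m\<delta> unfolding filterlim_at_top by blast
  then have q: "eventually (\<lambda>N. \<bar>?q\<bar> \<le> \<eta> * sqrt ((1 - \<eta>) * m N * \<delta> N)) sequentially"
  proof eventually_elim
    case (elim N)
    then have "(\<bar>?q\<bar> / \<eta>)\<^sup>2 \<le> (1 - \<eta>) * m N * \<delta> N"
      using \<eta>(2) by (simp add: divide_le_eq mult_ac)
    then have "\<bar>?q\<bar> / \<eta> \<le> sqrt ((1 - \<eta>) * m N * \<delta> N)"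
      by (rule real_le_rsqrt)
    then show ?case
      using \<eta>(1) by (simp add: divide_le_eq mult.commute)
  qed
  have "eventually (\<lambda>N. (1 - exp (- r * (m N * \<delta> N)) \<le> ?bayes N \<and> ?bayes N \<le> 1)
      \<and> (1 - exp (- r * (m N * \<delta> N)) \<le> ?oracle N \<and> ?oracle N \<le> 1)) sequentially"
    using q mn
  proof eventually_elim
    case (elim N)
    have "disjoint_contamination Q C (\<delta> N) (mu N) (f N) (g N)"
      using Q C sets_C disjoint \<delta>[of N] densities
      by (simp add: disjoint_contamination_def disjoint_contamination_axioms_def)
    then interpret disjoint_contamination Q C "\<delta> N" "mu N" "f N" "g N" .
    interpret S: prob_space "sample_space (m N) (n N) (mixture (\<delta> N) Q C) Q"
      by (rule prob_space_sample_space)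
    have "1 - exp (- r * (m N * \<delta> N)) \<le> ?bayes N"
      unfolding r_def Let_def by (rule prob_lambda_exceeds(1)) (use elim \<eta> in auto)
    moreover have "1 - exp (- r * (m N * \<delta> N)) \<le> ?oracle N"
      unfolding r_def Let_def by (rule prob_lambda_exceeds(2)) (use elim \<eta> in auto)
    ultimately show ?case
      unfolding Let_def by (simp add: S.prob_le_1)
  qed
  then show "?bayes \<longlonglongrightarrow> 1" and "?oracle \<longlonglongrightarrow> 1"
    by (auto intro!: LIMSEQ_one_if_exp_bound[OF m\<delta> r] elim!: eventually_mono)
qed

theorem proposition4:
  fixes m n :: "nat \<Rightarrow> nat" and \<pi> \<alpha> \<epsilon> :: real
    and Q C :: "'a measure"
  assumes "\<And>N. N \<ge> 2 \<Longrightarrow> m N + n N = N \<and> 0 < m N \<and> m N \<le> n N"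
    and "(\<lambda>N. real (m N) / real N) \<longlonglongrightarrow> \<pi>" and "0 < \<pi>" and "\<pi> < 1"
    and "0 < \<alpha>" and "\<alpha> < 1"
    and "prob_space Q" and "prob_space C" and "sets C = sets Q"
    and "disjoint_supports Q C"
    and "0 < \<epsilon>" and "\<epsilon> \<le> 1"
  shows "gamma_lower (bayes_good \<alpha> m n Q C \<epsilon>) = -1
       \<and> gamma_lower (oracle_good \<alpha> m n Q C \<epsilon>) = -1"
proof -
  \<comment> \<open>The quantile enters only as a constant.\<close>
  have mn: "eventually (\<lambda>N. 0 < m N \<and> 0 < n N) sequentially"
    using eventually_ge_at_top[of 2] by eventually_elim (use assms(1) in fastforce)
  have good: "bayes_good \<alpha> m n Q C \<epsilon> \<gamma> \<and> oracle_good \<alpha> m n Q C \<epsilon> \<gamma>" if "-1 < \<gamma>" for \<gamma>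
    using LIMSEQ_prob_lambda_exceeds[OF assms(7-12) _ that assms(2,3) mn]
    unfolding bayes_good_def oracle_good_def by (auto intro!: exI[of _ "\<lambda>_. 1/2"])
  have "gamma_lower (bayes_good \<alpha> m n Q C \<epsilon>) = -1"
    by (rule gamma_lower_eq_neg1) (use good in blast)
  moreover have "gamma_lower (oracle_good \<alpha> m n Q C \<epsilon>) = -1"
    by (rule gamma_lower_eq_neg1) (use good in blast)
  ultimately show ?thesis ..
qed

end
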